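(* With $k(c)$ as defined below, $k(c)\sim \dfrac{\log |c+2|^{-1}}{\log 4}$ as $c\to -2$, $c<-2$ (i.e. the ratio of the two sides tends to $1$).
   Context: For real $c<-2$ let $f_c(z)=z^2+c$ and $r_n(c)=f_c^{\circ n}(0)$, so $r_1(c)=c$ and $r_{n+1}(c)=r_n(c)^2+c$. For $-3<c<-2$, $k(c)$ denotes the smallest positive integer $k$ such that $r_{k+1}(c)/r_k(c)\ge 36$. *)

theory Defs
  imports "HOL-Analysis.Analysis"
begin

fun r :: "nat \<Rightarrow> real \<Rightarrow> real" where
  "r 0 c = 0"
| "r (Suc n) c = (r n c)^2 + c"

definition kk :: "real \<Rightarrow> nat" where
  "kk c = (LEAST k. 0 < k \<and> r (Suc k) c / r k c \<ge> 36)"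

end

theory Submission imports Defs "HOL-Real_Asymp.Real_Asymp" begin

text \<open>For \<open>c = -2 - \<epsilon>\<close> let \<open>\<beta> \<in> (2, 2 + \<epsilon>/3]\<close> be the repelling fixed point of
  \<open>z\<^sup>2 + c\<close>. The distance \<open>d\<^sub>n = r\<^sub>n - \<beta>\<close> obeys \<open>d\<^sub>n\<^sub>+\<^sub>1 = d\<^sub>n (d\<^sub>n + 2\<beta>)\<close> and
  \<open>d\<^sub>2 \<in> [2\<epsilon>, 4\<epsilon>]\<close>, so it grows by a factor of at least 4, and, while it stays
  below some \<open>\<delta>\<close>, by a factor of at most \<open>4 + \<epsilon> + \<delta>\<close>. The ratio \<open>r\<^sub>n\<^sub>+\<^sub>1/r\<^sub>n\<close> is
  \<open>r\<^sub>n + c/r\<^sub>n\<close>, which is below 36 while \<open>d\<^sub>n \<le> \<delta> \<le> 1\<close> and above 36 once \<open>d\<^sub>n \<ge> 40\<close>.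
  Hence \<open>log\<^bsub>4+\<epsilon>+\<delta>\<^esub> (\<delta>/4\<epsilon>) \<lesssim> k(c) \<lesssim> log\<^sub>4 (20/\<epsilon>)\<close>, and \<open>\<delta> = 1/ln(1/\<epsilon>)\<close> makes both
  bounds \<open>\<sim> log\<^sub>4 (1/\<epsilon>)\<close>.\<close>

definition repelling_fixpoint :: "real \<Rightarrow> real" where
  "repelling_fixpoint c = (1 + sqrt (1 - 4*c)) / 2"

lemma repelling_fixpoint_eq:
  assumes "c \<le> 1/4"
  shows "(repelling_fixpoint c)^2 + c = repelling_fixpoint c"
proof -
  have "(sqrt (1 - 4*c))^2 = 1 - 4*c" using assms by simp
  then show ?thesis unfolding repelling_fixpoint_def by (simp add: power2_eq_square field_simps)
qed

lemma repelling_fixpoint_gt_2: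
  assumes "c < -2"
  shows "2 < repelling_fixpoint c"
proof -
  have "sqrt 9 < sqrt (1 - 4*c)" using assms by (subst real_sqrt_less_iff) linarith
  then show ?thesis unfolding repelling_fixpoint_def by simp
qed

lemma repelling_fixpoint_le:
  assumes "c \<le> -2"
  shows "repelling_fixpoint c \<le> 2 + (-2 - c)/3"
proof -
  have "sqrt (1 - 4*c) \<le> 3 + 2*(-2 - c)/3"
  proof (rule real_le_lsqrt)
    have "(3 + 2*(-2 - c)/3)^2 = 1 - 4*c + (2*(-2 - c)/3)^2"
      by (simp add: power2_eq_square algebra_simps)
    then show "1 - 4*c \<le> (3 + 2*(-2 - c)/3)^2" by (smt (verit) zero_le_power2)
  qed (use assms in auto)
  then show ?thesis unfolding repelling_fixpoint_def by (simp add: field_simps)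
qed

lemma r_Suc_minus_fixpoint:
  assumes "b^2 + c = b"
  shows "r (Suc n) c - b = (r n c - b) * (r n c - b + 2*b)"
  using assms by (simp add: power2_eq_square algebra_simps)

lemma r_Suc_div:
  assumes "r n c \<noteq> 0"
  shows "r (Suc n) c / r n c = r n c + c / r n c"
  using assms by (simp add: power2_eq_square field_simps)

lemma fixpoint_dist_lower:
  assumes fixp: "b^2 + c = b" and "2 \<le> b" and "0 \<le> r m c - b" and "m \<le> n"
  shows "4^(n - m) * (r m c - b) \<le> r n c - b"
  using \<open>m \<le> n\<close>
proof (induction n rule: dec_induct)
  case base then show ?case by simp
next
  case (step n)
  have "0 \<le> (4::real)^(n - m) * (r m c - b)" using assms(3) by simp
  then have "0 \<le> r n c - b" using step.IH by linarith
  then have "(r n c - b) * 4 \<le> (r n c - b) * (r n c - b + 2*b)"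
    using \<open>2 \<le> b\<close> by (intro mult_left_mono) auto
  then have "4 * (r n c - b) \<le> r (Suc n) c - b"
    unfolding r_Suc_minus_fixpoint[OF fixp] by simp
  moreover have "(4::real)^(Suc n - m) = 4 * 4^(n - m)"
    using step.hyps by (simp add: Suc_diff_le)
  ultimately show ?case using step.IH by simp
qed

lemma fixpoint_dist_upper:
  assumes fixp: "b^2 + c = b" and "2 \<le> b" and "0 \<le> r m c - b" and "r m c - b \<le> D"
    and "0 \<le> \<delta>" and q: "2*b + \<delta> \<le> q" and "m \<le> n" and "D * q^(n - m) \<le> \<delta>"
  shows "r n c - b \<le> D * q^(n - m)"
  using \<open>m \<le> n\<close> \<open>D * q^(n - m) \<le> \<delta>\<close>
proof (induction n rule: dec_induct)
  case base then show ?case using assms by simp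
next
  case (step n)
  have "1 \<le> q" "0 \<le> D" using assms by linarith+
  then have "D * q^(n - m) \<le> D * q^(Suc n - m)"
    by (intro mult_left_mono power_increasing) auto
  with step.prems have small: "D * q^(n - m) \<le> \<delta>" by linarith
  then have IH: "r n c - b \<le> D * q^(n - m)" using step.IH by blast
  have "0 \<le> (4::real)^(n - m) * (r m c - b)" using assms(3) by simp
  then have d0: "0 \<le> r n c - b"
    using fixpoint_dist_lower[OF fixp \<open>2 \<le> b\<close> assms(3) step.hyps(1)] by linarith
  have "r (Suc n) c - b = (r n c - b) * (r n c - b + 2*b)" by (rule r_Suc_minus_fixpoint[OF fixp])
  also have "\<dots> \<le> (r n c - b) * q" using d0 IH small q by (intro mult_left_mono) auto
  also have "\<dots> \<le> D * q^(n - m) * q" using IH \<open>1 \<le> q\<close> by (intro mult_right_mono) auto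
  also have "\<dots> = D * q^(Suc n - m)" using step.hyps by (simp add: Suc_diff_le)
  finally show ?case .
qed

lemma r_2_minus_fixpoint_bounds:
  assumes "-3 < c" "c < -2"
  shows "2*(-2 - c) \<le> r 2 c - repelling_fixpoint c" "r 2 c - repelling_fixpoint c \<le> 4*(-2 - c)"
proof -
  define \<epsilon> where "\<epsilon> = -2 - c"
  have \<epsilon>: "0 < \<epsilon>" "\<epsilon> < 1" using assms unfolding \<epsilon>_def by auto
  have \<beta>: "2 < repelling_fixpoint c" "repelling_fixpoint c \<le> 2 + \<epsilon>/3"
    using repelling_fixpoint_gt_2 repelling_fixpoint_le assms unfolding \<epsilon>_def by auto
  have "r 2 c - repelling_fixpoint c = 3*\<epsilon> + \<epsilon>^2 - (repelling_fixpoint c - 2)"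
    by (simp add: numeral_2_eq_2 \<epsilon>_def power2_eq_square algebra_simps)
  moreover have "0 \<le> \<epsilon>^2" "\<epsilon>^2 \<le> \<epsilon>" using \<epsilon> by (auto simp: power2_eq_square)
  ultimately show "2*(-2 - c) \<le> r 2 c - repelling_fixpoint c"
    "r 2 c - repelling_fixpoint c \<le> 4*(-2 - c)"
    using \<beta> unfolding \<epsilon>_def[symmetric] by linarith+
qed

lemma le_pow_nat_ceiling_log:
  fixes b x :: real
  assumes "1 < b" "0 < x"
  shows "x \<le> b ^ nat \<lceil>log b x\<rceil>"
proof -
  have "x = b powr log b x" using assms by simp
  also have "\<dots> \<le> b powr real (nat \<lceil>log b x\<rceil>)" using assms(1) by (intro powr_mono) linarith+
  also have "\<dots> = b ^ nat \<lceil>log b x\<rceil>" using assms(1) by (simp add: powr_realpow)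
  finally show ?thesis .
qed

lemma pow_nat_floor_log_le:
  fixes b x :: real
  assumes "1 < b" "1 \<le> x"
  shows "b ^ nat \<lfloor>log b x\<rfloor> \<le> x"
proof -
  have "0 \<le> log b x" using assms by simp
  have "b ^ nat \<lfloor>log b x\<rfloor> = b powr real (nat \<lfloor>log b x\<rfloor>)" using assms(1) by (simp add: powr_realpow)
  also have "\<dots> \<le> b powr log b x" using assms(1) \<open>0 \<le> log b x\<close> by (intro powr_mono) auto
  also have "\<dots> = x" using assms by simp
  finally show ?thesis .
qed

text \<open>Once \<open>d\<^sub>n \<ge> 40\<close> we have \<open>r\<^sub>n \<ge> 42\<close> and \<open>r\<^sub>n\<^sub>+\<^sub>1/r\<^sub>n = r\<^sub>n + c/r\<^sub>n \<ge> 42 - 3/42\<close>.\<close>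

lemma r_ratio_ge_36:
  assumes "-3 < c" "c < -2" "2 \<le> n" "20 / (-2 - c) \<le> 4^(n - 2)"
  shows "36 \<le> r (Suc n) c / r n c"
proof -
  define \<beta> where "\<beta> = repelling_fixpoint c"
  have \<beta>: "\<beta>^2 + c = \<beta>" "2 < \<beta>"
    using repelling_fixpoint_eq repelling_fixpoint_gt_2 assms unfolding \<beta>_def by auto
  have d2: "2*(-2 - c) \<le> r 2 c - \<beta>"
    using r_2_minus_fixpoint_bounds assms unfolding \<beta>_def by blast
  have "42 - 2 = 20 / (-2 - c) * (2*(-2 - c))" using assms by (simp add: field_simps)
  also have "\<dots> \<le> 4^(n - 2) * (r 2 c - \<beta>)"
    using assms d2 by (intro mult_mono) auto
  also have "\<dots> \<le> r n c - \<beta>"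
    using fixpoint_dist_lower[OF \<beta>(1)] \<beta>(2) d2 assms by force
  finally have "42 \<le> r n c" using \<beta> by simp
  then have "-3/42 \<le> c / r n c" using assms by (simp add: field_simps)
  then show ?thesis using r_Suc_div[of n c] \<open>42 \<le> r n c\<close> by simp
qed

lemma r_ratio_lt_36:
  assumes "-3 < c" "c < -2" "1 \<le> n" "0 < \<delta>" "\<delta> \<le> 1"
    and "4*(-2 - c) * (4 + (-2 - c) + \<delta>)^(n - 2) \<le> \<delta>"
  shows "r (Suc n) c / r n c < 36"
proof (cases "n = 1")
  case True
  then have "r (Suc n) c / r n c = c + 1" using assms by (simp add: numeral_2_eq_2 field_simps)
  then show ?thesis using assms by simp
next
  case False
  then have "2 \<le> n" using assms by linarith
  define \<beta> where "\<beta> = repelling_fixpoint c"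
  have \<beta>: "\<beta>^2 + c = \<beta>" "2 < \<beta>" "\<beta> \<le> 2 + (-2 - c)/3"
    using repelling_fixpoint_eq repelling_fixpoint_gt_2 repelling_fixpoint_le assms
    unfolding \<beta>_def by auto
  have d2: "2*(-2 - c) \<le> r 2 c - \<beta>" "r 2 c - \<beta> \<le> 4*(-2 - c)"
    using r_2_minus_fixpoint_bounds assms unfolding \<beta>_def by blast+
  have "2*\<beta> + \<delta> \<le> 4 + (-2 - c) + \<delta>" using \<beta>(3) assms(2) by (simp add: field_simps)
  then have "r n c - \<beta> \<le> 4*(-2 - c) * (4 + (-2 - c) + \<delta>)^(n - 2)"
    using fixpoint_dist_upper[OF \<beta>(1) _ _ d2(2) _ _ \<open>2 \<le> n\<close> assms(6)] \<beta>(2) d2(1) assms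
    by simp
  then have "r n c - \<beta> \<le> \<delta>" using assms(6) by (rule order_trans)
  then have "r n c < 36" using assms(1,5) \<beta>(3) by (simp add: field_simps)
  have "0 \<le> 4^(n - 2) * (r 2 c - \<beta>)" using d2(1) assms(2) by simp
  also have "\<dots> \<le> r n c - \<beta>"
    using \<beta> d2(1) assms(2) \<open>2 \<le> n\<close> by (intro fixpoint_dist_lower) auto
  finally have "0 < r n c" using \<beta>(2) by linarith
  moreover have "c / r n c < 0" using \<open>0 < r n c\<close> assms by (simp add: divide_neg_pos)
  ultimately show ?thesis using r_Suc_div[of n c] \<open>r n c < 36\<close> by simp
qed

lemma r_ratio_ge_36_after_log:
  assumes "-3 < c" "c < -2"
  defines "N \<equiv> 2 + nat \<lceil>log 4 (20 / (-2 - c))\<rceil>"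
  shows "36 \<le> r (Suc N) c / r N c"
proof -
  have "20 / (-2 - c) \<le> 4 ^ nat \<lceil>log 4 (20 / (-2 - c))\<rceil>"
    using assms by (intro le_pow_nat_ceiling_log) auto
  then show ?thesis using assms by (intro r_ratio_ge_36) (auto simp: N_def)
qed

lemma kk_spec:
  assumes "-3 < c" "c < -2"
  shows "0 < kk c \<and> 36 \<le> r (Suc (kk c)) c / r (kk c) c"
  unfolding kk_def
  by (rule LeastI[where k = "2 + nat \<lceil>log 4 (20 / (-2 - c))\<rceil>"],
      intro conjI r_ratio_ge_36_after_log[OF assms]) simp

lemma kk_upper:
  assumes "-3 < c" "c < -2"
  shows "real (kk c) \<le> 3 + log 4 (20 / (-2 - c))"
proof -
  have "kk c \<le> 2 + nat \<lceil>log 4 (20 / (-2 - c))\<rceil>"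
    unfolding kk_def by (rule Least_le, intro conjI r_ratio_ge_36_after_log[OF assms]) simp
  moreover have "0 < log 4 (20 / (-2 - c))" using assms by simp
  ultimately show ?thesis by linarith
qed

lemma kk_lower:
  assumes "-3 < c" "c < -2" "0 < \<delta>" "\<delta> \<le> 1" "4*(-2 - c) \<le> \<delta>"
  shows "1 + log (4 + (-2 - c) + \<delta>) (\<delta> / (4*(-2 - c))) \<le> real (kk c)"
proof -
  define q where "q = 4 + (-2 - c) + \<delta>"
  define y where "y = log q (\<delta> / (4*(-2 - c)))"
  define n where "n = 2 + nat \<lfloor>y\<rfloor>"
  have "1 < q" "0 \<le> y" using assms by (auto simp: q_def y_def)
  have "q^(n - 2) = q ^ nat \<lfloor>y\<rfloor>" by (simp add: n_def)
  also have "\<dots> \<le> \<delta> / (4*(-2 - c))"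
    unfolding y_def using assms \<open>1 < q\<close> by (intro pow_nat_floor_log_le) auto
  finally have "q^(n - 2) \<le> \<delta> / (4*(-2 - c))" .
  then have "4*(-2 - c) * q^(n - 2) \<le> \<delta>" using assms by (simp add: field_simps)
  have small: "r (Suc j) c / r j c < 36" if "1 \<le> j" "j \<le> n" for j
  proof -
    have "4*(-2 - c) * q^(j - 2) \<le> 4*(-2 - c) * q^(n - 2)"
      using assms \<open>1 < q\<close> that by (intro mult_left_mono power_increasing) auto
    with \<open>4*(-2 - c) * q^(n - 2) \<le> \<delta>\<close> have "4*(-2 - c) * q^(j - 2) \<le> \<delta>" by linarith
    then show ?thesis unfolding q_def by (rule r_ratio_lt_36[OF assms(1,2) that(1) assms(3,4)])
  qed
  have "n < kk c"
  proof (rule ccontr)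
    assume "\<not> n < kk c"
    with kk_spec[OF assms(1,2)] small[of "kk c"] show False by simp
  qed
  then show ?thesis using \<open>0 \<le> y\<close> unfolding n_def y_def q_def by linarith
qed

text \<open>The slack \<open>\<delta> = 1/ln(1/\<epsilon>)\<close> tends to 0, so the growth factor \<open>4 + \<epsilon> + \<delta>\<close> tends to 4,
  while \<open>log (\<delta>/4\<epsilon>) \<sim> log (1/\<epsilon>)\<close> still.\<close>

lemma kk_asymp: "((\<lambda>\<epsilon>. real (kk (-2 - \<epsilon>)) / log 4 (1/\<epsilon>)) \<longlongrightarrow> 1) (at_right 0)"
proof (rule tendsto_sandwich)
  define \<delta> where "\<delta> \<epsilon> = 1 / ln (1/\<epsilon>)" for \<epsilon> :: real
  have "\<forall>\<^sub>F \<epsilon> in at_right 0. 0 < (\<epsilon>::real)" by (rule eventually_at_right_less)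
  moreover have "\<forall>\<^sub>F \<epsilon> in at_right 0. (\<epsilon>::real) < 1" by real_asymp
  moreover have "\<forall>\<^sub>F \<epsilon> in at_right 0. 4*\<epsilon> \<le> \<delta> \<epsilon>" unfolding \<delta>_def by real_asymp
  moreover have "\<forall>\<^sub>F \<epsilon> in at_right 0. \<delta> \<epsilon> \<le> 1" unfolding \<delta>_def by real_asymp
  ultimately have ev: "\<forall>\<^sub>F \<epsilon> in at_right 0. 0 < \<epsilon> \<and> \<epsilon> < 1 \<and> 4*\<epsilon> \<le> \<delta> \<epsilon> \<and> \<delta> \<epsilon> \<le> 1"
    by eventually_elim auto
  show "\<forall>\<^sub>F \<epsilon> in at_right 0.
      (1 + log (4 + \<epsilon> + \<delta> \<epsilon>) (\<delta> \<epsilon> / (4*\<epsilon>))) / log 4 (1/\<epsilon>) \<le> real (kk (-2 - \<epsilon>)) / log 4 (1/\<epsilon>)"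
    using ev
  proof eventually_elim
    case (elim \<epsilon>)
    then have "0 < \<delta> \<epsilon>" by linarith
    with elim have "1 + log (4 + \<epsilon> + \<delta> \<epsilon>) (\<delta> \<epsilon> / (4*\<epsilon>)) \<le> real (kk (-2 - \<epsilon>))"
      using kk_lower[of "-2 - \<epsilon>" "\<delta> \<epsilon>"] by simp
    then show ?case using elim by (intro divide_right_mono) auto
  qed
  show "\<forall>\<^sub>F \<epsilon> in at_right 0.
      real (kk (-2 - \<epsilon>)) / log 4 (1/\<epsilon>) \<le> (3 + log 4 (20/\<epsilon>)) / log 4 (1/\<epsilon>)"
    using ev
  proof eventually_elim
    case (elim \<epsilon>)
    then have "real (kk (-2 - \<epsilon>)) \<le> 3 + log 4 (20/\<epsilon>)" using kk_upper[of "-2 - \<epsilon>"] by simp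
    then show ?case using elim by (intro divide_right_mono) auto
  qed
  show "((\<lambda>\<epsilon>. (1 + log (4 + \<epsilon> + \<delta> \<epsilon>) (\<delta> \<epsilon> / (4*\<epsilon>))) / log 4 (1/\<epsilon>)) \<longlongrightarrow> 1) (at_right 0)"
    unfolding \<delta>_def by (real_asymp simp: log_def)
  show "((\<lambda>\<epsilon>. (3 + log 4 (20/\<epsilon>)) / log 4 (1/\<epsilon>)) \<longlongrightarrow> 1) (at_right 0)"
    by (real_asymp simp: log_def)
qed

theorem lemma1:
  shows "((\<lambda>c. real (kk c) / (ln (1 / \<bar>c + 2\<bar>) / ln 4)) \<longlongrightarrow> 1) (at_left (-2))"
proof -
  have "filterlim (\<lambda>c. -2 - c) (at_right 0) (at_left (-2::real))"
    unfolding filterlim_at by (auto simp: eventually_at_filter intro!: tendsto_eq_intros)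
  from filterlim_compose[OF kk_asymp this]
  have "((\<lambda>c. real (kk (-2 - (-2 - c))) / log 4 (1 / (-2 - c))) \<longlongrightarrow> 1) (at_left (-2))" .
  moreover have "\<forall>\<^sub>F c in at_left (-2::real).
      real (kk (-2 - (-2 - c))) / log 4 (1 / (-2 - c)) = real (kk c) / (ln (1 / \<bar>c + 2\<bar>) / ln 4)"
    using eventually_at_left_real[of "-3" "-2::real"] by (auto simp: log_def elim!: eventually_mono)
  ultimately show ?thesis by (rule tendsto_cong[THEN iffD1, rotated])
qed

end
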